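(* Let $\mathsf{MRK}$ be the axiom scheme $\neg\forall\alpha\mathsf{P}\to\exists\alpha\mathsf{P}^\bot$ for atomic $\mathsf{P}$. (1) Every instance of $\mathsf{MRK}$ is provable in $\mathsf{HA}+\mathsf{EM}_1^-$. (2) Conversely, the rule $\mathsf{EM}_1^-$ is derivable in $\mathsf{HA}+\mathsf{MRK}$: for atomic $\mathsf{P}$ and $C$, if $\Gamma,\forall\alpha\mathsf{P}\vdash\exists\beta C$ and $\Gamma,\exists\alpha\mathsf{P}^\bot\vdash\exists\beta C$ in $\mathsf{HA}+\mathsf{MRK}$, then $\Gamma\vdash\exists\beta C$ in $\mathsf{HA}+\mathsf{MRK}$.
   Context: $\mathsf{HA}$ is intuitionistic first-order arithmetic (Heyting arithmetic, in natural deduction) over $0,\mathsf{S},+,\cdot,=$ with the Peano axioms and induction scheme; atomic formulas are decidable and $\mathsf{P}^\bot$ denotes the complementary atomic predicate of $\mathsf{P}$ (so $\mathsf{P}^\bot\equiv\neg\mathsf{P}$). $\mathsf{HA}+\mathsf{EM}_1^-$ is $\mathsf{HA}$ extended with the rule $\mathsf{EM}_1^-$: from $\Gamma,\forall\alpha\mathsf{P}\vdash\exists\beta C$ and $\Gamma,\exists\alpha\mathsf{P}^\bot\vdash\exists\beta C$, with $\mathsf{P},C$ atomic, infer $\Gamma\vdash\exists\beta C$ (discharging the two hypotheses). $\mathsf{HA}+\mathsf{MRK}$ is $\mathsf{HA}$ with the instances of $\mathsf{MRK}$ as additional axioms. *)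

theory Defs
  imports Main
begin

datatype trm = Var nat | Zero | Sc trm | Plus trm trm | Times trm trm

text \<open>Atomic formulas: Atom True s t is s = t, Atom False s t is its
complementary atomic predicate s \<noteq> t.\<close>

datatype form =
    Atom bool trm trm
  | Bot
  | And form form
  | Or form form
  | Imp form form
  | All form
  | Ex form

abbreviation Eq :: "trm \<Rightarrow> trm \<Rightarrow> form" where "Eq s t \<equiv> Atom True s t"
abbreviation Neg :: "form \<Rightarrow> form" where "Neg A \<equiv> Imp A Bot"

fun atomic :: "form \<Rightarrow> bool" where
  "atomic (Atom b s t) = True"
| "atomic _ = False"

fun compl :: "form \<Rightarrow> form" where
  "compl (Atom b s t) = Atom (\<not> b) s t"
| "compl A = A"

fun liftt :: "nat \<Rightarrow> trm \<Rightarrow> trm" where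
  "liftt k (Var i) = (if i < k then Var i else Var (Suc i))"
| "liftt k Zero = Zero"
| "liftt k (Sc t) = Sc (liftt k t)"
| "liftt k (Plus s t) = Plus (liftt k s) (liftt k t)"
| "liftt k (Times s t) = Times (liftt k s) (liftt k t)"

fun substt :: "trm \<Rightarrow> nat \<Rightarrow> trm \<Rightarrow> trm" where
  "substt (Var i) k u = (if i < k then Var i else if i = k then u else Var (i - 1))"
| "substt Zero k u = Zero"
| "substt (Sc t) k u = Sc (substt t k u)"
| "substt (Plus s t) k u = Plus (substt s k u) (substt t k u)"
| "substt (Times s t) k u = Times (substt s k u) (substt t k u)"

fun liftf :: "nat \<Rightarrow> form \<Rightarrow> form" where
  "liftf k (Atom b s t) = Atom b (liftt k s) (liftt k t)"
| "liftf k Bot = Bot"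
| "liftf k (And A B) = And (liftf k A) (liftf k B)"
| "liftf k (Or A B) = Or (liftf k A) (liftf k B)"
| "liftf k (Imp A B) = Imp (liftf k A) (liftf k B)"
| "liftf k (All A) = All (liftf (Suc k) A)"
| "liftf k (Ex A) = Ex (liftf (Suc k) A)"

fun substf :: "form \<Rightarrow> nat \<Rightarrow> trm \<Rightarrow> form" where
  "substf (Atom b s t) k u = Atom b (substt s k u) (substt t k u)"
| "substf Bot k u = Bot"
| "substf (And A B) k u = And (substf A k u) (substf B k u)"
| "substf (Or A B) k u = Or (substf A k u) (substf B k u)"
| "substf (Imp A B) k u = Imp (substf A k u) (substf B k u)"
| "substf (All A) k u = All (substf A (Suc k) (liftt 0 u))"
| "substf (Ex A) k u = Ex (substf A (Suc k) (liftt 0 u))"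

text \<open>Replace variable 0 by u, keeping the other variables unchanged.\<close>
definition inst0 :: "form \<Rightarrow> trm \<Rightarrow> form" where
  "inst0 A u = substf (liftf 1 A) 0 u"

inductive_set HA_axioms :: "form set" where
  eq_refl: "Eq t t \<in> HA_axioms"
| eq_subst: "atomic A \<Longrightarrow> Imp (Eq s t) (Imp (substf A 0 s) (substf A 0 t)) \<in> HA_axioms"
| compl1: "Imp (Atom False s t) (Neg (Atom True s t)) \<in> HA_axioms"
| compl2: "Imp (Neg (Atom True s t)) (Atom False s t) \<in> HA_axioms"
| suc_ne_zero: "Neg (Eq (Sc t) Zero) \<in> HA_axioms"
| suc_inj: "Imp (Eq (Sc s) (Sc t)) (Eq s t) \<in> HA_axioms"
| plus_0: "Eq (Plus t Zero) t \<in> HA_axioms"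
| plus_S: "Eq (Plus s (Sc t)) (Sc (Plus s t)) \<in> HA_axioms"
| times_0: "Eq (Times t Zero) Zero \<in> HA_axioms"
| times_S: "Eq (Times s (Sc t)) (Plus (Times s t) s) \<in> HA_axioms"
| induction: "Imp (substf A 0 Zero)
            (Imp (All (Imp A (inst0 A (Sc (Var 0))))) (All A)) \<in> HA_axioms"

text \<open>prv em Ax \<Gamma> A: A is derivable from hypotheses \<Gamma> in HA extended by the
additional axioms Ax, and additionally by the rule EM1^- if em is True.\<close>

inductive prv :: "bool \<Rightarrow> form set \<Rightarrow> form list \<Rightarrow> form \<Rightarrow> bool" where
  hyp: "A \<in> set \<Gamma> \<Longrightarrow> prv em Ax \<Gamma> A"
| ha_ax: "A \<in> HA_axioms \<Longrightarrow> prv em Ax \<Gamma> A"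
| ext_ax: "A \<in> Ax \<Longrightarrow> prv em Ax \<Gamma> A"
| botE: "prv em Ax \<Gamma> Bot \<Longrightarrow> prv em Ax \<Gamma> A"
| andI: "prv em Ax \<Gamma> A \<Longrightarrow> prv em Ax \<Gamma> B \<Longrightarrow> prv em Ax \<Gamma> (And A B)"
| andE1: "prv em Ax \<Gamma> (And A B) \<Longrightarrow> prv em Ax \<Gamma> A"
| andE2: "prv em Ax \<Gamma> (And A B) \<Longrightarrow> prv em Ax \<Gamma> B"
| orI1: "prv em Ax \<Gamma> A \<Longrightarrow> prv em Ax \<Gamma> (Or A B)"
| orI2: "prv em Ax \<Gamma> B \<Longrightarrow> prv em Ax \<Gamma> (Or A B)"
| orE: "prv em Ax \<Gamma> (Or A B) \<Longrightarrow> prv em Ax (A # \<Gamma>) C \<Longrightarrow> prv em Ax (B # \<Gamma>) C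
        \<Longrightarrow> prv em Ax \<Gamma> C"
| impI: "prv em Ax (A # \<Gamma>) B \<Longrightarrow> prv em Ax \<Gamma> (Imp A B)"
| impE: "prv em Ax \<Gamma> (Imp A B) \<Longrightarrow> prv em Ax \<Gamma> A \<Longrightarrow> prv em Ax \<Gamma> B"
| allI: "prv em Ax (map (liftf 0) \<Gamma>) A \<Longrightarrow> prv em Ax \<Gamma> (All A)"
| allE: "prv em Ax \<Gamma> (All A) \<Longrightarrow> prv em Ax \<Gamma> (substf A 0 t)"
| exI: "prv em Ax \<Gamma> (substf A 0 t) \<Longrightarrow> prv em Ax \<Gamma> (Ex A)"
| exE: "prv em Ax \<Gamma> (Ex A) \<Longrightarrow> prv em Ax (A # map (liftf 0) \<Gamma>) (liftf 0 C)
        \<Longrightarrow> prv em Ax \<Gamma> C"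
| em1: "em \<Longrightarrow> atomic P \<Longrightarrow> atomic C
        \<Longrightarrow> prv em Ax (All P # \<Gamma>) (Ex C) \<Longrightarrow> prv em Ax (Ex (compl P) # \<Gamma>) (Ex C)
        \<Longrightarrow> prv em Ax \<Gamma> (Ex C)"

definition MRK_inst :: "form \<Rightarrow> form" where
  "MRK_inst P = Imp (Neg (All P)) (Ex (compl P))"

definition MRK :: "form set" where
  "MRK = {MRK_inst P | P. atomic P}"

abbreviation prv_HA_EM1 :: "form list \<Rightarrow> form \<Rightarrow> bool" where
  "prv_HA_EM1 \<equiv> prv True {}"

abbreviation prv_HA_MRK :: "form list \<Rightarrow> form \<Rightarrow> bool" where
  "prv_HA_MRK \<equiv> prv False MRK"

end

theory Submission
  imports Defs
begin

text \<open>MRK follows from EM1^- by splitting on \<forall>\<alpha>P: in the first branch the hypothesis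
\<not>\<forall>\<alpha>P is contradicted, in the second \<exists>\<alpha>P^\<bottom> is what we want. Conversely, to simulate
EM1^- with MRK, assume D = \<forall>\<beta>C^\<bottom>. Then \<not>\<exists>\<beta>C, so the first premise yields \<not>\<forall>\<alpha>P; MRK
turns this into \<exists>\<alpha>P^\<bottom>, and the second premise gives \<exists>\<beta>C, a contradiction. Hence \<not>D,
and MRK applied to the atomic formula C^\<bottom> gives \<exists>\<beta>(C^\<bottom>)^\<bottom> = \<exists>\<beta>C.\<close>

lemma prv_weaken:
  "prv em Ax \<Gamma> A \<Longrightarrow> set \<Gamma> \<subseteq> set \<Gamma>' \<Longrightarrow> prv em Ax \<Gamma>' A"
proof (induction arbitrary: \<Gamma>' rule: prv.induct)
  case (orE em Ax \<Gamma> A B C)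
  then have "set (A # \<Gamma>) \<subseteq> set (A # \<Gamma>')" "set (B # \<Gamma>) \<subseteq> set (B # \<Gamma>')" by auto
  with orE show ?case by (blast intro: prv.orE)
next
  case (impI em Ax A \<Gamma> B)
  then have "set (A # \<Gamma>) \<subseteq> set (A # \<Gamma>')" by auto
  with impI show ?case by (blast intro: prv.impI)
next
  case (allI em Ax \<Gamma> A)
  then have "set (map (liftf 0) \<Gamma>) \<subseteq> set (map (liftf 0) \<Gamma>')" by auto
  with allI show ?case by (blast intro: prv.allI)
next
  case (exE em Ax \<Gamma> A C)
  then have "set (A # map (liftf 0) \<Gamma>) \<subseteq> set (A # map (liftf 0) \<Gamma>')" by auto
  with exE show ?case by (blast intro: prv.exE)
next
  case (em1 em P C Ax \<Gamma>)
  then have "set (All P # \<Gamma>) \<subseteq> set (All P # \<Gamma>')"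
    "set (Ex (compl P) # \<Gamma>) \<subseteq> set (Ex (compl P) # \<Gamma>')" by auto
  with em1 show ?case by (blast intro: prv.em1)
qed (auto intro: prv.intros)

lemma prv_cut: "prv em Ax \<Gamma> A \<Longrightarrow> prv em Ax (A # \<Gamma>) B \<Longrightarrow> prv em Ax \<Gamma> B"
  by (metis prv.impI prv.impE)

lemma prv_hyp_head: "prv em Ax (A # \<Gamma>) A"
  by (rule prv.hyp) simp

lemma atomic_compl: "atomic P \<Longrightarrow> atomic (compl P)"
  by (cases P) auto

lemma compl_compl [simp]: "compl (compl A) = A"
  by (cases A) auto

lemma substt_liftt_Var: "substt (liftt (Suc k) t) k (Var k) = t"
  by (induction t) auto

lemma substf_liftf_Var: "substf (liftf (Suc k) A) k (Var k) = A"
  by (induction A arbitrary: k) (auto simp: substt_liftt_Var)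

lemma prv_liftf_All_Var0: "prv em Ax \<Gamma> (liftf 0 (All A)) \<Longrightarrow> prv em Ax \<Gamma> A"
  using prv.allE[where t = "Var 0"] by (fastforce simp: substf_liftf_Var)

lemma prv_atomic_compl_contradiction:
  assumes "atomic C" "prv em Ax \<Gamma> C" "prv em Ax \<Gamma> (compl C)"
  shows "prv em Ax \<Gamma> Bot"
proof -
  obtain b s t where C: "C = Atom b s t"
    using \<open>atomic C\<close> by (cases C) auto
  have eq: "prv em Ax \<Gamma> (Eq s t)" and ne: "prv em Ax \<Gamma> (Atom False s t)"
    using assms(2,3) unfolding C by (cases b; simp)+
  have "prv em Ax \<Gamma> (Imp (Atom False s t) (Neg (Eq s t)))"
    by (intro prv.ha_ax HA_axioms.compl1)
  then show ?thesis
    using ne eq by (blast intro: prv.impE)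
qed

lemma prv_All_compl_imp_not_Ex:
  assumes "atomic C"
  shows "prv em Ax \<Gamma> (Imp (All (compl C)) (Neg (Ex C)))"
proof (intro prv.impI)
  let ?\<Delta> = "C # map (liftf 0) (Ex C # All (compl C) # \<Gamma>)"
  have "prv em Ax ?\<Delta> (compl C)"
    by (rule prv_liftf_All_Var0, rule prv.hyp) simp
  then have "prv em Ax ?\<Delta> (liftf 0 Bot)"
    using prv_atomic_compl_contradiction[OF assms prv_hyp_head] by simp
  then show "prv em Ax (Ex C # All (compl C) # \<Gamma>) Bot"
    using prv.exE[OF prv_hyp_head] by blast
qed

lemma prv_MRK_inst:
  "MRK \<subseteq> Ax \<Longrightarrow> atomic P \<Longrightarrow> prv em Ax \<Gamma> (MRK_inst P)"
  by (rule prv.ext_ax) (auto simp: MRK_def)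

lemma MRK_inst_prv_EM1:
  assumes "atomic P"
  shows "prv True Ax \<Gamma> (MRK_inst P)"
  unfolding MRK_inst_def
proof (rule prv.impI, rule prv.em1[where P = P])
  show "prv True Ax (All P # Neg (All P) # \<Gamma>) (Ex (compl P))"
    by (rule prv.botE, rule prv.impE[where A = "All P"]) (auto intro: prv.hyp)
  show "prv True Ax (Ex (compl P) # Neg (All P) # \<Gamma>) (Ex (compl P))"
    by (rule prv_hyp_head)
qed (simp_all add: assms atomic_compl)

lemma EM1_rule_prv_MRK:
  assumes MRK: "MRK \<subseteq> Ax" and P: "atomic P" and C: "atomic C"
    and prv_All: "prv em Ax (All P # \<Gamma>) (Ex C)"
    and prv_Ex_compl: "prv em Ax (Ex (compl P) # \<Gamma>) (Ex C)"
  shows "prv em Ax \<Gamma> (Ex C)"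
proof -
  let ?D = "All (compl C)"
  have not_Ex_C: "prv em Ax (?D # \<Gamma>) (Neg (Ex C))"
    by (rule prv.impE[OF prv_All_compl_imp_not_Ex[OF C] prv_hyp_head])
  have "prv em Ax (?D # \<Gamma>) (Neg (All P))"
  proof (rule prv.impI)
    have "set (?D # \<Gamma>) \<subseteq> set (All P # ?D # \<Gamma>)" "set (All P # \<Gamma>) \<subseteq> set (All P # ?D # \<Gamma>)"
      by auto
    then show "prv em Ax (All P # ?D # \<Gamma>) Bot"
      using prv.impE[OF prv_weaken[OF not_Ex_C] prv_weaken[OF prv_All]] by blast
  qed
  then have "prv em Ax (?D # \<Gamma>) (Ex (compl P))"
    by (rule prv.impE[OF prv_MRK_inst[OF MRK P, unfolded MRK_inst_def]])
  then have "prv em Ax (?D # \<Gamma>) (Ex C)"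
    by (rule prv_cut) (rule prv_weaken[OF prv_Ex_compl], auto)
  then have "prv em Ax \<Gamma> (Neg ?D)"
    using prv.impE[OF not_Ex_C] by (blast intro: prv.impI)
  then show ?thesis
    using prv.impE[OF prv_MRK_inst[OF MRK atomic_compl[OF C], unfolded MRK_inst_def]]
    by simp
qed

theorem mainTheorem6:
  shows "(\<forall>P. atomic P \<longrightarrow> prv_HA_EM1 [] (MRK_inst P))
       \<and> (\<forall>\<Gamma> P C. atomic P \<longrightarrow> atomic C
            \<longrightarrow> prv_HA_MRK (All P # \<Gamma>) (Ex C)
            \<longrightarrow> prv_HA_MRK (Ex (compl P) # \<Gamma>) (Ex C)
            \<longrightarrow> prv_HA_MRK \<Gamma> (Ex C))"
  using MRK_inst_prv_EM1 EM1_rule_prv_MRK[OF subset_refl] by blast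

end
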